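(* In the setting below, an invertible linear operator on $U^*\oplus U$ belongs to the Mackey group $G_U=G(U^*\oplus U,U^*\oplus U)$ if and only if it is given by left multiplication by a matrix $\psi\in J$ with $\psi$ invertible and $\psi^{-1}\in J$. In other words, $G_U=\widetilde{G}_U$.
   Context: $U$ is a complex vector space with basis $\{e_1,e_2,\dots\}$. Elements of $U^*\oplus U$ are written as pairs $(\gamma,y)$ with $\gamma=(\dots,\gamma_{-2},\gamma_{-1})$ an arbitrary sequence indexed by $\mathbb{Z}_{<0}$ ($\gamma_{-i}=\gamma(e_i)$) and $y=(y_1,y_2,\dots)$ a finitary sequence (finitely many nonzero entries), regarded as a column vector indexed by the ordered set $\mathbb{Z}\setminus\{0\}=\mathbb{Z}_{<0}\sqcup\mathbb{Z}_{>0}$. $U^*\oplus U$ carries the nondegenerate pairing $\langle(\gamma,y),(\varkappa,z)\rangle=\gamma(z)+\varkappa(y)$, and $G(U^*\oplus U,U^*\oplus U)$ is the group of invertible linear $\varphi$ on $U^*\oplus U$ such that $\varphi^*$ maps $U^*\oplus U$ (embedded in $(U^*\oplus U)^*$ via the pairing) onto itself. (This is the Mackey group $G(V_E,V_{*E})$ for $V_E=(W_* )^*\oplus U$, $V_{*E}=W_*\oplus U^*$ under an identification $W_*\cong U$.) $J$ is the set of matrices $M$ with rows and columns indexed by $\mathbb{Z}\setminus\{0\}$, written in blocks $\begin{pmatrix}A&B\\ C&D\end{pmatrix}$ according to $\mathbb{Z}_{<0}\sqcup\mathbb{Z}_{>0}$, such that each row of $A$ is finitary, each column of $D$ is finitary,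 and $C$ has finitely many nonzero entries; such matrices act on $U^*\oplus U$ by left multiplication on columns. $\widetilde{G}_U$ is the group of automorphisms of $U^*\oplus U$ given by matrices $\psi$ with $\psi,\psi^{-1}\in J$. *)

theory Defs
  imports Complex_Main
begin

text \<open>Vectors of U^* (+) U are functions on the index set Z minus 0 (value 0 at index 0 by
convention): negative indices carry gamma (arbitrary), positive indices carry y (finitary).\<close>

type_synonym vec = "int \<Rightarrow> complex"
type_synonym mat = "int \<Rightarrow> int \<Rightarrow> complex"

definition VE :: "vec set" where
  "VE = {v. v 0 = 0 \<and> finite {i. 0 < i \<and> v i \<noteq> 0}}"

text \<open>The pairing <(gamma,y),(kappa,z)> = gamma(z) + kappa(y).\<close>
definition pairing :: "vec \<Rightarrow> vec \<Rightarrow> complex" where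
  "pairing v w = (\<Sum>i\<in>{i. 0 < i \<and> w i \<noteq> 0}. v (-i) * w i)
               + (\<Sum>i\<in>{i. 0 < i \<and> v i \<noteq> 0}. w (-i) * v i)"

definition linear_on_VE :: "(vec \<Rightarrow> vec) \<Rightarrow> bool" where
  "linear_on_VE \<phi> \<longleftrightarrow> (\<forall>v\<in>VE. \<forall>w\<in>VE. \<forall>a b::complex.
      \<phi> (\<lambda>i. a * v i + b * w i) = (\<lambda>i. a * \<phi> v i + b * \<phi> w i))"

text \<open>The Mackey group G(U^* (+) U, U^* (+) U): invertible linear maps whose dual maps
U^* (+) U (embedded in its dual via the pairing) onto itself.\<close>
definition mackey_G :: "(vec \<Rightarrow> vec) \<Rightarrow> bool" where
  "mackey_G \<phi> \<longleftrightarrow> linear_on_VE \<phi> \<and> bij_betw \<phi> VE VE \<and>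
     (\<forall>w\<in>VE. \<exists>w'\<in>VE. \<forall>v\<in>VE. pairing w (\<phi> v) = pairing w' v) \<and>
     (\<forall>w'\<in>VE. \<exists>w\<in>VE. \<forall>v\<in>VE. pairing w (\<phi> v) = pairing w' v)"

definition inJ :: "mat \<Rightarrow> bool" where
  "inJ M \<longleftrightarrow> (\<forall>j. M 0 j = 0) \<and> (\<forall>i. M i 0 = 0) \<and>
     (\<forall>i<0. finite {j. j < 0 \<and> M i j \<noteq> 0}) \<and>
     (\<forall>j>0. finite {i. 0 < i \<and> M i j \<noteq> 0}) \<and>
     finite {(i, j). 0 < i \<and> j < 0 \<and> M i j \<noteq> 0}"

definition mat_act :: "mat \<Rightarrow> vec \<Rightarrow> vec" where
  "mat_act M v = (\<lambda>i. if i = 0 then 0 else (\<Sum>j\<in>{j. j \<noteq> 0 \<and> M i j * v j \<noteq> 0}. M i j * v j))"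

definition mat_mult :: "mat \<Rightarrow> mat \<Rightarrow> mat" where
  "mat_mult M N = (\<lambda>i k. \<Sum>j\<in>{j. j \<noteq> 0 \<and> M i j * N j k \<noteq> 0}. M i j * N j k)"

definition mat_id :: mat where
  "mat_id = (\<lambda>i k. if i = k \<and> i \<noteq> 0 then 1 else 0)"

definition tilde_G :: "(vec \<Rightarrow> vec) \<Rightarrow> bool" where
  "tilde_G \<phi> \<longleftrightarrow> (\<exists>\<psi> \<psi>'. inJ \<psi> \<and> inJ \<psi>' \<and> mat_mult \<psi> \<psi>' = mat_id \<and> mat_mult \<psi>' \<psi> = mat_id \<and>
       (\<forall>v\<in>VE. \<phi> v = mat_act \<psi> v))"

end

theory Submission
  imports Defs "HOL-Library.Groups_Big_Fun" "HOL-Computational_Algebra.Polynomial"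
    "HOL-Analysis.Continuum_Not_Denumerable"
begin

text \<open>A matrix M in J maps U^* (+) U to itself, and its reflected transpose
M^*(m, k) = M(-k, -m) is again in J and is the adjoint of M for the pairing; so an invertible
matrix in J with inverse in J lies in the Mackey group.

Conversely, for phi in the Mackey group, pulling back the coordinate functionals
v |-> (phi v)_i gives the rows of a matrix psi representing phi. Its rows lie in
U^* (+) U, hence are finitary on negative indices; its columns are the images phi(delta_j),
hence finitary on positive indices. Finiteness of the block C comes from testing phi on the
vector (x^(-j))_(j<0): its i-th entry is a polynomial in x that vanishes identically only if
row i has no negative entries, and as the complex numbers are uncountable, some x avoids the
roots of all these countably many polynomials; so only finitely many positive rows meet the
negative indices. The same applied to the inverse of phi puts psi^(-1) in J.\<close>

lemma Sum_any_mult_right: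
  fixes g :: "'a \<Rightarrow> 'b::semiring_no_zero_divisors"
  shows "Sum_any (\<lambda>j. g j * c) = Sum_any g * c"
proof (cases "c = 0")
  case False
  then have "{j. g j * c \<noteq> 0} = {j. g j \<noteq> 0}" by auto
  then show ?thesis unfolding Sum_any.expand_set by (simp add: sum_distrib_right)
qed simp

lemma Sum_any_mult_left:
  fixes g :: "'a \<Rightarrow> 'b::semiring_no_zero_divisors"
  shows "Sum_any (\<lambda>j. c * g j) = c * Sum_any g"
proof (cases "c = 0")
  case False
  then have "{j. c * g j \<noteq> 0} = {j. g j \<noteq> 0}" by auto
  then show ?thesis unfolding Sum_any.expand_set by (simp add: sum_distrib_left)
qed simp

lemma Sum_any_swap_finite:
  assumes "finite {(a, b). g a b \<noteq> 0}"
  shows "Sum_any (\<lambda>a. Sum_any (g a)) = (Sum_any (\<lambda>b. Sum_any (\<lambda>a. g a b)) :: 'c::comm_monoid_add)"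
proof (rule Sum_any.swap)
  let ?S = "{(a, b). g a b \<noteq> 0}"
  show "finite (fst ` ?S \<times> snd ` ?S)" using assms by simp
  show "{a. \<exists>b. g a b \<noteq> 0} \<times> {b. \<exists>a. g a b \<noteq> 0} \<subseteq> fst ` ?S \<times> snd ` ?S"
    by (auto simp: image_iff)
qed

lemma VE_zero: "v \<in> VE \<Longrightarrow> v 0 = 0"
  and VE_finite_support: "v \<in> VE \<Longrightarrow> finite {i. 0 < i \<and> v i \<noteq> 0}"
  by (auto simp: VE_def)

lemma VE_finite_reflected_support:
  assumes "v \<in> VE"
  shows "finite {i. i < 0 \<and> v (-i) \<noteq> 0}"
proof -
  have "{i. i < 0 \<and> v (-i) \<noteq> 0} = uminus -` {i. 0 < i \<and> v i \<noteq> 0}" by auto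
  then show ?thesis using finite_vimageI[OF VE_finite_support[OF assms] inj_uminus] by simp
qed

lemma VE_lincomb:
  assumes "v \<in> VE" "w \<in> VE"
  shows "(\<lambda>i. a * v i + b * w i) \<in> VE"
proof -
  have "{i. 0 < i \<and> a * v i + b * w i \<noteq> 0} \<subseteq> {i. 0 < i \<and> v i \<noteq> 0} \<union> {i. 0 < i \<and> w i \<noteq> 0}"
    by auto
  then show ?thesis using assms finite_subset by (auto simp: VE_def)
qed

definition delta :: "int \<Rightarrow> vec" where
  "delta k = (\<lambda>i. if i = k then 1 else 0)"

lemma delta_VE: "k \<noteq> 0 \<Longrightarrow> delta k \<in> VE"
proof -
  assume "k \<noteq> 0"
  moreover have "{i. 0 < i \<and> delta k i \<noteq> 0} \<subseteq> {k}" by (auto simp: delta_def)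
  ultimately show ?thesis using finite_subset by (auto simp: VE_def delta_def)
qed

lemma Sum_any_mult_delta: "Sum_any (\<lambda>j. f j * delta k j) = (f k :: complex)"
proof -
  have "Sum_any (\<lambda>j. f j * delta k j) = Sum_any (\<lambda>j. if j = k then f j else 0)"
    by (rule Sum_any.cong) (simp add: delta_def)
  then show ?thesis by simp
qed

lemma pairing_eq_Sum_any:
  assumes v: "v \<in> VE" and w: "w \<in> VE"
  shows "pairing v w = Sum_any (\<lambda>i. v (-i) * w i)"
proof -
  let ?pos = "\<lambda>i. if 0 < i then v (-i) * w i else 0"
  let ?neg = "\<lambda>i. if i < 0 then v (-i) * w i else 0"
  have fin_pos: "finite {i. ?pos i \<noteq> 0}"
    by (rule finite_subset[OF _ VE_finite_support[OF w]]) auto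
  have fin_neg: "finite {i. ?neg i \<noteq> 0}"
    by (rule finite_subset[OF _ VE_finite_reflected_support[OF v]]) auto
  have "(\<Sum>i\<in>{i. 0 < i \<and> w i \<noteq> 0}. v (-i) * w i) = Sum_any ?pos"
    by (subst Sum_any.expand_superset[OF VE_finite_support[OF w]]) auto
  moreover have "(\<Sum>i\<in>{i. 0 < i \<and> v i \<noteq> 0}. w (-i) * v i)
      = Sum_any (\<lambda>i. if 0 < i then w (-i) * v i else 0)"
    by (subst Sum_any.expand_superset[OF VE_finite_support[OF v]]) auto
  moreover have "\<dots> = Sum_any ?neg"
    by (rule Sum_any.reindex_cong[of uminus]) (auto simp: bij_def fun_eq_iff mult.commute)
  moreover have "Sum_any ?pos + Sum_any ?neg = Sum_any (\<lambda>i. v (-i) * w i)"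
    unfolding Sum_any.distrib[OF fin_pos fin_neg, symmetric]
    by (rule Sum_any.cong) (auto simp: VE_zero[OF w])
  ultimately show ?thesis unfolding pairing_def by simp
qed

lemma pairing_delta:
  assumes "w \<in> VE" "i \<noteq> 0"
  shows "pairing (delta (-i)) w = w i"
proof -
  have "pairing (delta (-i)) w = Sum_any (\<lambda>k. delta (-i) (-k) * w k)"
    using pairing_eq_Sum_any[OF delta_VE assms(1)] assms(2) by simp
  also have "\<dots> = Sum_any (\<lambda>k. if k = i then w k else 0)"
    by (rule Sum_any.cong) (auto simp: delta_def)
  finally show ?thesis by simp
qed

lemma
  assumes "inJ M"
  shows inJ_zero_row: "M 0 j = 0"
    and inJ_zero_col: "M i 0 = 0"
    and inJ_finite_pos_col: "0 < j \<Longrightarrow> finite {i. 0 < i \<and> M i j \<noteq> 0}"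
    and inJ_finite_corner: "finite {(i, j). 0 < i \<and> j < 0 \<and> M i j \<noteq> 0}"
  using assms unfolding inJ_def by auto

lemma inJ_finite_neg_row:
  assumes "inJ M"
  shows "finite {j. j < 0 \<and> M i j \<noteq> 0}"
proof -
  consider "i < 0" | "i = 0" | "0 < i" by arith
  then show ?thesis
  proof cases
    case 1
    then show ?thesis using assms by (simp add: inJ_def)
  next
    case 2
    then show ?thesis using inJ_zero_row[OF assms] by simp
  next
    case 3
    then have "{j. j < 0 \<and> M i j \<noteq> 0} \<subseteq> snd ` {(i, j). 0 < i \<and> j < 0 \<and> M i j \<noteq> 0}"
      by (auto simp: image_iff)
    then show ?thesis using inJ_finite_corner[OF assms] finite_subset by blast
  qed
qed

lemma mat_act_eq_Sum_any:
  assumes "\<And>j. M 0 j = 0" "\<And>i. M i 0 = 0"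
  shows "mat_act M v i = Sum_any (\<lambda>j. M i j * v j)"
proof -
  have "{j. j \<noteq> 0 \<and> M i j * v j \<noteq> 0} = {j. M i j * v j \<noteq> 0}" using assms by auto
  then show ?thesis using assms unfolding mat_act_def Sum_any.expand_set by auto
qed

lemma inJ_mat_act_eq_Sum_any:
  assumes "inJ M"
  shows "mat_act M v i = Sum_any (\<lambda>j. M i j * v j)"
  using mat_act_eq_Sum_any inJ_zero_row[OF assms] inJ_zero_col[OF assms] by blast

lemma mat_mult_eq_Sum_any:
  assumes "\<And>i. M i 0 = 0"
  shows "mat_mult M N i k = Sum_any (\<lambda>j. M i j * N j k)"
proof -
  have "{j. j \<noteq> 0 \<and> M i j * N j k \<noteq> 0} = {j. M i j * N j k \<noteq> 0}" using assms by auto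
  then show ?thesis unfolding mat_mult_def Sum_any.expand_set by auto
qed

lemma mat_act_delta:
  assumes "\<And>j. M 0 j = 0" "\<And>i. M i 0 = 0"
  shows "mat_act M (delta k) = (\<lambda>i. M i k)"
  using mat_act_eq_Sum_any[of M, OF assms] Sum_any_mult_delta by auto

lemma inJ_finite_row_support:
  assumes "inJ M" "v \<in> VE"
  shows "finite {j. M i j * v j \<noteq> 0}"
proof -
  have "j < 0 \<and> M i j \<noteq> 0 \<or> 0 < j \<and> v j \<noteq> 0" if nz: "M i j * v j \<noteq> 0" for j
  proof -
    have "j \<noteq> 0" using nz VE_zero[OF assms(2)] by auto
    then show ?thesis using nz by (auto simp: neq_iff)
  qed
  then have "{j. M i j * v j \<noteq> 0} \<subseteq> {j. j < 0 \<and> M i j \<noteq> 0} \<union> {j. 0 < j \<and> v j \<noteq> 0}"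
    by auto
  then show ?thesis
    using inJ_finite_neg_row[OF assms(1)] VE_finite_support[OF assms(2)] finite_subset by blast
qed

lemma mat_act_VE:
  assumes M: "inJ M" and v: "v \<in> VE"
  shows "mat_act M v \<in> VE"
proof -
  let ?corner = "{(i, j). 0 < i \<and> j < 0 \<and> M i j \<noteq> 0}"
  let ?cols = "\<Union>j\<in>{j. 0 < j \<and> v j \<noteq> 0}. {i. 0 < i \<and> M i j \<noteq> 0}"
  have "{i. 0 < i \<and> mat_act M v i \<noteq> 0} \<subseteq> fst ` ?corner \<union> ?cols"
  proof
    fix i assume i: "i \<in> {i. 0 < i \<and> mat_act M v i \<noteq> 0}"
    then obtain j where j: "M i j * v j \<noteq> 0"
      using inJ_mat_act_eq_Sum_any[OF M, of v i]
      by (auto elim: Sum_any.not_neutral_obtains_not_neutral)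
    then have "j < 0 \<or> 0 < j" using VE_zero[OF v] by (cases "j = 0") auto
    then show "i \<in> fst ` ?corner \<union> ?cols" using i j by (auto simp: image_iff)
  qed
  moreover have "finite (fst ` ?corner \<union> ?cols)"
    using inJ_finite_corner[OF M] inJ_finite_pos_col[OF M] VE_finite_support[OF v] by auto
  moreover have "mat_act M v 0 = 0" by (simp add: mat_act_def)
  ultimately show ?thesis unfolding VE_def using finite_subset by blast
qed

lemma mat_act_lincomb:
  assumes M: "inJ M" and v: "v \<in> VE" and w: "w \<in> VE"
  shows "mat_act M (\<lambda>j. a * v j + b * w j) = (\<lambda>i. a * mat_act M v i + b * mat_act M w i)"
proof
  fix i
  have fin_v: "finite {j. a * (M i j * v j) \<noteq> 0}"
    using inJ_finite_row_support[OF M v, of i] by (rule finite_subset[rotated]) auto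
  have fin_w: "finite {j. b * (M i j * w j) \<noteq> 0}"
    using inJ_finite_row_support[OF M w, of i] by (rule finite_subset[rotated]) auto
  have "mat_act M (\<lambda>j. a * v j + b * w j) i
      = Sum_any (\<lambda>j. a * (M i j * v j) + b * (M i j * w j))"
    by (simp add: inJ_mat_act_eq_Sum_any[OF M] algebra_simps)
  also have "\<dots> = a * mat_act M v i + b * mat_act M w i"
    by (simp add: Sum_any.distrib[OF fin_v fin_w] Sum_any_mult_left inJ_mat_act_eq_Sum_any[OF M])
  finally show "mat_act M (\<lambda>j. a * v j + b * w j) i = a * mat_act M v i + b * mat_act M w i" .
qed

lemma finite_triple_support:
  assumes u: "finite {j. j < 0 \<and> u j \<noteq> 0}" and N: "inJ N" and v: "v \<in> VE"
  shows "finite {(j, k). u j * N j k * v k \<noteq> 0}"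
proof -
  let ?U = "{j. j < 0 \<and> u j \<noteq> 0}" and ?S = "{k. 0 < k \<and> v k \<noteq> 0}"
  let ?T = "(\<Union>k\<in>?S. {j. 0 < j \<and> N j k \<noteq> 0} \<times> {k}) \<union> {(j, k). 0 < j \<and> k < 0 \<and> N j k \<noteq> 0}
    \<union> ?U \<times> ?S \<union> Sigma ?U (\<lambda>j. {k. k < 0 \<and> N j k \<noteq> 0})"
  have "(j, k) \<in> ?T" if nz: "u j * N j k * v k \<noteq> 0" for j k
  proof -
    have "j \<noteq> 0" "k \<noteq> 0" using nz inJ_zero_row[OF N] VE_zero[OF v] by auto
    then show ?thesis using nz by (auto simp: neq_iff)
  qed
  then have "{(j, k). u j * N j k * v k \<noteq> 0} \<subseteq> ?T" by auto
  moreover have "finite ?T"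
    using u VE_finite_support[OF v] inJ_finite_pos_col[OF N] inJ_finite_corner[OF N]
      inJ_finite_neg_row[OF N] by (auto intro!: finite_SigmaI)
  ultimately show ?thesis using finite_subset by blast
qed

lemma mat_mult_zero_row_col:
  assumes "inJ M" "inJ N"
  shows "mat_mult M N 0 k = 0" "mat_mult M N i 0 = 0"
  using assms by (simp_all add: mat_mult_eq_Sum_any inJ_zero_row inJ_zero_col)

lemma mat_act_mat_mult:
  assumes M: "inJ M" and N: "inJ N" and v: "v \<in> VE"
  shows "mat_act N (mat_act M v) = mat_act (mat_mult N M) v"
proof
  fix i
  have "mat_act N (mat_act M v) i = Sum_any (\<lambda>j. Sum_any (\<lambda>k. N i j * M j k * v k))"
    by (simp add: inJ_mat_act_eq_Sum_any M N Sum_any_mult_left mult.assoc)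
  also have "\<dots> = Sum_any (\<lambda>k. Sum_any (\<lambda>j. N i j * M j k * v k))"
    by (rule Sum_any_swap_finite[OF finite_triple_support[OF inJ_finite_neg_row[OF N] M v]])
  also have "\<dots> = mat_act (mat_mult N M) v i"
    by (simp add: mat_act_eq_Sum_any[of "mat_mult N M", OF mat_mult_zero_row_col[OF N M]] mat_mult_eq_Sum_any
        inJ_zero_col[OF N] Sum_any_mult_right)
  finally show "mat_act N (mat_act M v) i = mat_act (mat_mult N M) v i" .
qed

lemma mat_act_mat_id:
  assumes "v \<in> VE"
  shows "mat_act mat_id v = v"
proof
  fix i
  show "mat_act mat_id v i = v i"
  proof (cases "i = 0")
    case True
    then show ?thesis using VE_zero[OF assms] by (simp add: mat_act_def)
  next
    case False
    have "mat_act mat_id v i = Sum_any (\<lambda>k. mat_id i k * v k)"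
      by (rule mat_act_eq_Sum_any) (simp_all add: mat_id_def)
    also have "\<dots> = Sum_any (\<lambda>k. if k = i then v k else 0)"
      by (rule Sum_any.cong) (auto simp: mat_id_def False)
    finally show ?thesis by simp
  qed
qed

lemma mat_mult_eq_mat_id:
  assumes A: "inJ A" and B: "inJ B" and inverse: "\<And>v. v \<in> VE \<Longrightarrow> mat_act A (mat_act B v) = v"
  shows "mat_mult A B = mat_id"
proof (intro ext)
  fix i k
  show "mat_mult A B i k = mat_id i k"
  proof (cases "k = 0")
    case True
    then show ?thesis using mat_mult_zero_row_col[OF A B] by (simp add: mat_id_def)
  next
    case False
    have "mat_act (mat_mult A B) (delta k) = delta k"
      using mat_act_mat_mult[OF B A delta_VE[OF False]] inverse[OF delta_VE[OF False]] by simp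
    then have "mat_mult A B i k = delta k i"
      using mat_act_delta[of "mat_mult A B" k] mat_mult_zero_row_col[OF A B] by (simp add: fun_eq_iff)
    then show ?thesis using False by (auto simp: delta_def mat_id_def)
  qed
qed

definition mat_adjoint :: "mat \<Rightarrow> mat" where
  "mat_adjoint M = (\<lambda>m k. M (-k) (-m))"

lemma inJ_mat_adjoint:
  assumes M: "inJ M"
  shows "inJ (mat_adjoint M)"
  unfolding inJ_def
proof (intro conjI allI impI)
  fix m k :: int
  show "mat_adjoint M 0 k = 0" "mat_adjoint M m 0 = 0"
    using inJ_zero_row[OF M] inJ_zero_col[OF M] by (simp_all add: mat_adjoint_def)
  assume "m < 0"
  have "{k. k < 0 \<and> mat_adjoint M m k \<noteq> 0} = uminus -` {i. 0 < i \<and> M i (-m) \<noteq> 0}"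
    by (auto simp: mat_adjoint_def)
  then show "finite {k. k < 0 \<and> mat_adjoint M m k \<noteq> 0}"
    using finite_vimageI[OF inJ_finite_pos_col[OF M] inj_uminus] \<open>m < 0\<close> by simp
next
  fix k :: int assume "0 < k"
  have "{m. 0 < m \<and> mat_adjoint M m k \<noteq> 0} = uminus -` {j. j < 0 \<and> M (-k) j \<noteq> 0}"
    by (auto simp: mat_adjoint_def)
  then show "finite {m. 0 < m \<and> mat_adjoint M m k \<noteq> 0}"
    using finite_vimageI[OF inJ_finite_neg_row[OF M] inj_uminus] by simp
next
  have "{(m, k). 0 < m \<and> k < 0 \<and> mat_adjoint M m k \<noteq> 0}
      = (\<lambda>(m, k). (-k, -m)) -` {(i, j). 0 < i \<and> j < 0 \<and> M i j \<noteq> 0}"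
    by (auto simp: mat_adjoint_def)
  moreover have "inj (\<lambda>(m :: int, k :: int). (-k, -m))" by (auto simp: inj_def)
  ultimately show "finite {(m, k). 0 < m \<and> k < 0 \<and> mat_adjoint M m k \<noteq> 0}"
    using finite_vimageI[OF inJ_finite_corner[OF M]] by simp
qed

lemma pairing_mat_act:
  assumes M: "inJ M" and w: "w \<in> VE" and v: "v \<in> VE"
  shows "pairing w (mat_act M v) = pairing (mat_act (mat_adjoint M) w) v"
proof -
  have adjoint_entry: "mat_act (mat_adjoint M) w (-j) = Sum_any (\<lambda>i. w (-i) * M i j)" for j
  proof -
    have "mat_act (mat_adjoint M) w (-j) = Sum_any (\<lambda>k. M (-k) j * w k)"
      unfolding inJ_mat_act_eq_Sum_any[OF inJ_mat_adjoint[OF M]] by (simp add: mat_adjoint_def)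
    also have "\<dots> = Sum_any (\<lambda>i. w (-i) * M i j)"
      by (rule Sum_any.reindex_cong[of uminus]) (auto simp: bij_def fun_eq_iff mult.commute)
    finally show ?thesis .
  qed
  have "pairing w (mat_act M v) = Sum_any (\<lambda>i. Sum_any (\<lambda>j. w (-i) * M i j * v j))"
    by (simp add: pairing_eq_Sum_any[OF w mat_act_VE[OF M v]] inJ_mat_act_eq_Sum_any[OF M]
        Sum_any_mult_left mult.assoc)
  also have "\<dots> = Sum_any (\<lambda>j. Sum_any (\<lambda>i. w (-i) * M i j * v j))"
    by (rule Sum_any_swap_finite[OF finite_triple_support[OF VE_finite_reflected_support[OF w] M v]])
  also have "\<dots> = pairing (mat_act (mat_adjoint M) w) v"
    by (simp add: pairing_eq_Sum_any[OF mat_act_VE[OF inJ_mat_adjoint[OF M] w] v] adjoint_entry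
        Sum_any_mult_right)
  finally show ?thesis .
qed

lemma mackey_G_cong:
  assumes "\<And>v. v \<in> VE \<Longrightarrow> \<phi> v = \<phi>' v"
  shows "mackey_G \<phi> \<longleftrightarrow> mackey_G \<phi>'"
proof -
  have "linear_on_VE \<phi> \<longleftrightarrow> linear_on_VE \<phi>'"
    unfolding linear_on_VE_def using assms VE_lincomb by auto
  moreover have "bij_betw \<phi> VE VE \<longleftrightarrow> bij_betw \<phi>' VE VE"
    by (rule bij_betw_cong) (rule assms)
  ultimately show ?thesis unfolding mackey_G_def using assms by auto
qed

lemma mackey_G_mat_act:
  assumes J: "inJ \<psi>" "inJ \<psi>'" and inverse: "mat_mult \<psi> \<psi>' = mat_id" "mat_mult \<psi>' \<psi> = mat_id"
  shows "mackey_G (mat_act \<psi>)"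
  unfolding mackey_G_def linear_on_VE_def
proof (intro conjI ballI allI)
  show "mat_act \<psi> (\<lambda>i. a * v i + b * w i) = (\<lambda>i. a * mat_act \<psi> v i + b * mat_act \<psi> w i)"
    if "v \<in> VE" "w \<in> VE" for v w a b
    using mat_act_lincomb[OF J(1) that] .
  show "bij_betw (mat_act \<psi>) VE VE"
    by (rule bij_betw_byWitness[where f' = "mat_act \<psi>'"])
      (auto simp: J mat_act_VE mat_act_mat_mult inverse mat_act_mat_id)
  show "\<exists>w'\<in>VE. \<forall>v\<in>VE. pairing w (mat_act \<psi> v) = pairing w' v" if "w \<in> VE" for w
    using that J(1) mat_act_VE[OF inJ_mat_adjoint] pairing_mat_act by blast
  show "\<exists>w\<in>VE. \<forall>v\<in>VE. pairing w (mat_act \<psi> v) = pairing w' v" if w': "w' \<in> VE" for w'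
  proof (intro bexI ballI)
    show "mat_act (mat_adjoint \<psi>') w' \<in> VE" by (rule mat_act_VE[OF inJ_mat_adjoint[OF J(2)] w'])
    fix v assume v: "v \<in> VE"
    have "pairing w' v = pairing w' (mat_act \<psi>' (mat_act \<psi> v))"
      by (simp add: mat_act_mat_mult[OF J v] inverse mat_act_mat_id v)
    then show "pairing (mat_act (mat_adjoint \<psi>') w') (mat_act \<psi> v) = pairing w' v"
      using pairing_mat_act[OF J(2) w' mat_act_VE[OF J(1) v]] by simp
  qed
qed

lemma tilde_G_imp_mackey_G:
  assumes "tilde_G \<phi>"
  shows "mackey_G \<phi>"
proof -
  obtain \<psi> \<psi>' where "inJ \<psi>" "inJ \<psi>'" "mat_mult \<psi> \<psi>' = mat_id" "mat_mult \<psi>' \<psi> = mat_id"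
    and "\<forall>v\<in>VE. \<phi> v = mat_act \<psi> v"
    using assms unfolding tilde_G_def by blast
  then show ?thesis using mackey_G_mat_act mackey_G_cong[of \<phi> "mat_act \<psi>"] by blast
qed

definition geom_vec :: "complex \<Rightarrow> vec" where
  "geom_vec x = (\<lambda>j. if j < 0 then x ^ nat (-j) else 0)"

lemma geom_vec_VE: "geom_vec x \<in> VE"
  by (simp add: VE_def geom_vec_def)

lemma row_times_geom_vec_poly:
  assumes fin: "finite {j. j < 0 \<and> c j \<noteq> 0}"
  shows "\<exists>p. (\<forall>x. Sum_any (\<lambda>j. c j * geom_vec x j) = poly p x) \<and> (p = 0 \<longleftrightarrow> (\<forall>j<0. c j = 0))"
proof -
  let ?S = "{j. j < 0 \<and> c j \<noteq> 0}"
  define p where "p = (\<Sum>j\<in>?S. monom (c j) (nat (-j)))"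
  have eval: "Sum_any (\<lambda>j. c j * geom_vec x j) = poly p x" for x
  proof -
    have "Sum_any (\<lambda>j. c j * geom_vec x j) = (\<Sum>j\<in>?S. c j * geom_vec x j)"
      by (rule Sum_any.expand_superset[OF fin]) (auto simp: geom_vec_def split: if_splits)
    then show ?thesis by (simp add: p_def poly_sum poly_monom geom_vec_def)
  qed
  have coeff_p: "coeff p (nat (-j)) = c j" if "j < 0" for j
  proof -
    have "coeff p (nat (-j)) = (\<Sum>i\<in>?S. if i = j then c i else 0)"
      unfolding p_def coeff_sum by (rule sum.cong) (use that in \<open>auto simp: coeff_monom\<close>)
    then show ?thesis using fin that by auto
  qed
  have "p = 0 \<longleftrightarrow> (\<forall>j<0. c j = 0)"
  proof
    assume "p = 0"
    then show "\<forall>j<0. c j = 0" using coeff_p by (metis coeff_0)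
  qed (simp add: p_def)
  with eval show ?thesis by blast
qed

lemma countable_polys_common_nonroot:
  fixes p :: "'a \<Rightarrow> complex poly"
  assumes "countable I" and nonzero: "\<And>i. i \<in> I \<Longrightarrow> p i \<noteq> 0"
  obtains x where "\<And>i. i \<in> I \<Longrightarrow> poly (p i) x \<noteq> 0"
proof -
  have "countable (\<Union>i\<in>I. {x. poly (p i) x = 0})"
    using assms by (intro countable_UN) (auto intro: countable_finite poly_roots_finite)
  then have "(\<Union>i\<in>I. {x. poly (p i) x = 0}) \<noteq> UNIV"
    using uncountable_UNIV_complex by auto
  then show thesis using that by blast
qed

lemma finite_corner_if_mat_act_VE:
  assumes zero: "\<And>j. \<psi> 0 j = 0" "\<And>i. \<psi> i 0 = 0"
    and neg_rows: "\<And>i. finite {j. j < 0 \<and> \<psi> i j \<noteq> 0}"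
    and maps_VE: "\<And>v. v \<in> VE \<Longrightarrow> mat_act \<psi> v \<in> VE"
  shows "finite {(i, j). 0 < i \<and> j < 0 \<and> \<psi> i j \<noteq> 0}"
proof -
  define R where "R = {i. 0 < i \<and> (\<exists>j<0. \<psi> i j \<noteq> 0)}"
  obtain p where row_poly: "\<And>i x. Sum_any (\<lambda>j. \<psi> i j * geom_vec x j) = poly (p i) x"
    and p_zero: "\<And>i. p i = 0 \<longleftrightarrow> (\<forall>j<0. \<psi> i j = 0)"
    using row_times_geom_vec_poly[OF neg_rows] by metis
  obtain x where x: "\<And>i. i \<in> R \<Longrightarrow> poly (p i) x \<noteq> 0"
    using countable_polys_common_nonroot[of R p] p_zero by (auto simp: R_def)
  have "R \<subseteq> {i. 0 < i \<and> mat_act \<psi> (geom_vec x) i \<noteq> 0}"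
    using x by (auto simp: R_def mat_act_eq_Sum_any[of \<psi>, OF zero] row_poly)
  then have "finite R"
    using VE_finite_support[OF maps_VE[OF geom_vec_VE]] finite_subset by blast
  then have "finite (Sigma R (\<lambda>i. {j. j < 0 \<and> \<psi> i j \<noteq> 0}))"
    using neg_rows by (rule finite_SigmaI)
  moreover have "{(i, j). 0 < i \<and> j < 0 \<and> \<psi> i j \<noteq> 0} \<subseteq> Sigma R (\<lambda>i. {j. j < 0 \<and> \<psi> i j \<noteq> 0})"
    by (auto simp: R_def)
  ultimately show ?thesis using finite_subset by blast
qed

lemma inJ_if_mat_act_VE:
  assumes zero: "\<And>j. \<psi> 0 j = 0" "\<And>i. \<psi> i 0 = 0"
    and neg_rows: "\<And>i. finite {j. j < 0 \<and> \<psi> i j \<noteq> 0}"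
    and maps_VE: "\<And>v. v \<in> VE \<Longrightarrow> mat_act \<psi> v \<in> VE"
  shows "inJ \<psi>"
proof -
  have "finite {i. 0 < i \<and> \<psi> i j \<noteq> 0}" if "0 < j" for j
  proof -
    have "mat_act \<psi> (delta j) \<in> VE" using maps_VE delta_VE that by simp
    then show ?thesis using VE_finite_support mat_act_delta[of \<psi> j, OF zero] by metis
  qed
  then show ?thesis
    unfolding inJ_def using zero neg_rows finite_corner_if_mat_act_VE[OF assms] by blast
qed

lemma mat_representation:
  assumes maps_VE: "\<And>v. v \<in> VE \<Longrightarrow> \<phi> v \<in> VE"
    and pullback: "\<forall>w\<in>VE. \<exists>w'\<in>VE. \<forall>v\<in>VE. pairing w (\<phi> v) = pairing w' v"
  obtains \<psi> where "inJ \<psi>" "\<And>v. v \<in> VE \<Longrightarrow> \<phi> v = mat_act \<psi> v"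
proof -
  have "\<forall>i. \<exists>r. i \<noteq> 0 \<longrightarrow> r \<in> VE \<and> (\<forall>v\<in>VE. \<phi> v i = pairing r v)"
    using pullback delta_VE pairing_delta maps_VE by (metis neg_equal_0_iff_equal)
  then obtain r where r_VE: "\<And>i. i \<noteq> 0 \<Longrightarrow> r i \<in> VE"
    and r: "\<And>i v. i \<noteq> 0 \<Longrightarrow> v \<in> VE \<Longrightarrow> \<phi> v i = pairing (r i) v"
    by metis
  define \<psi> where "\<psi> i j = (if i = 0 \<or> j = 0 then 0 else r i (-j))" for i j
  have zero: "\<And>j. \<psi> 0 j = 0" "\<And>i. \<psi> i 0 = 0" by (simp_all add: \<psi>_def)
  have rep: "\<phi> v = mat_act \<psi> v" if v: "v \<in> VE" for v
  proof
    fix i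
    show "\<phi> v i = mat_act \<psi> v i"
    proof (cases "i = 0")
      case True
      then show ?thesis using VE_zero[OF maps_VE[OF v]] by (simp add: mat_act_def)
    next
      case False
      have "\<phi> v i = Sum_any (\<lambda>j. r i (-j) * v j)"
        using r[OF False v] pairing_eq_Sum_any[OF r_VE[OF False] v] by simp
      also have "\<dots> = Sum_any (\<lambda>j. \<psi> i j * v j)"
        by (rule Sum_any.cong) (simp add: \<psi>_def False VE_zero[OF v])
      finally show ?thesis by (simp add: mat_act_eq_Sum_any[of \<psi>, OF zero])
    qed
  qed
  have neg_rows: "finite {j. j < 0 \<and> \<psi> i j \<noteq> 0}" for i
  proof (cases "i = 0")
    case False
    have "{j. j < 0 \<and> \<psi> i j \<noteq> 0} \<subseteq> {j. j < 0 \<and> r i (-j) \<noteq> 0}" by (auto simp: \<psi>_def)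
    then show ?thesis using VE_finite_reflected_support[OF r_VE[OF False]] finite_subset by blast
  qed (simp add: zero)
  have "inJ \<psi>"
    by (rule inJ_if_mat_act_VE[of \<psi>, OF zero neg_rows]) (use rep maps_VE in metis)
  then show thesis using that rep by blast
qed

lemma mackey_G_imp_tilde_G:
  assumes "mackey_G \<phi>"
  shows "tilde_G \<phi>"
proof -
  have bij: "bij_betw \<phi> VE VE"
    and pullback: "\<forall>w\<in>VE. \<exists>w'\<in>VE. \<forall>v\<in>VE. pairing w (\<phi> v) = pairing w' v"
    and pushforward: "\<forall>w'\<in>VE. \<exists>w\<in>VE. \<forall>v\<in>VE. pairing w (\<phi> v) = pairing w' v"
    using assms unfolding mackey_G_def by blast+
  define g where "g = inv_into VE \<phi>"
  have maps_VE: "\<And>v. v \<in> VE \<Longrightarrow> \<phi> v \<in> VE" and g_maps_VE: "\<And>v. v \<in> VE \<Longrightarrow> g v \<in> VE"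
    using bij bij_betw_inv_into[OF bij] bij_betwE unfolding g_def by blast+
  have \<phi>_g: "\<And>v. v \<in> VE \<Longrightarrow> \<phi> (g v) = v" and g_\<phi>: "\<And>v. v \<in> VE \<Longrightarrow> g (\<phi> v) = v"
    using bij unfolding g_def by (simp_all add: bij_betw_def f_inv_into_f inv_into_f_f)
  have g_pullback: "\<forall>w\<in>VE. \<exists>w'\<in>VE. \<forall>v\<in>VE. pairing w (g v) = pairing w' v"
    using pushforward g_maps_VE \<phi>_g by metis
  obtain \<psi> where \<psi>: "inJ \<psi>" "\<And>v. v \<in> VE \<Longrightarrow> \<phi> v = mat_act \<psi> v"
    using mat_representation[OF maps_VE pullback] by blast
  obtain \<psi>' where \<psi>': "inJ \<psi>'" "\<And>v. v \<in> VE \<Longrightarrow> g v = mat_act \<psi>' v"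
    using mat_representation[OF g_maps_VE g_pullback] by blast
  have "mat_mult \<psi> \<psi>' = mat_id"
    by (rule mat_mult_eq_mat_id[OF \<psi>(1) \<psi>'(1)]) (metis \<psi> \<psi>' g_maps_VE \<phi>_g)
  moreover have "mat_mult \<psi>' \<psi> = mat_id"
    by (rule mat_mult_eq_mat_id[OF \<psi>'(1) \<psi>(1)]) (metis \<psi> \<psi>' maps_VE g_\<phi>)
  ultimately show ?thesis unfolding tilde_G_def using \<psi> \<psi>' by blast
qed

theorem theoremA8:
  fixes \<phi> :: "vec \<Rightarrow> vec"
  shows "mackey_G \<phi> \<longleftrightarrow> tilde_G \<phi>"
  using mackey_G_imp_tilde_G tilde_G_imp_mackey_G by blast

end
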